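(* For every integer $n\ge1$, $$\sum_{d\mid n,\ d'\mid n} c_d\Big(\frac{n}{d'}\Big)c_{d'}\Big(\frac{n}{d}\Big)=n\,\tau(n),$$ where the sum runs over all ordered pairs $(d,d')$ of positive divisors of $n$.
   Context: For integers $m\ge1$ and $x$, the Ramanujan sum is $c_m(x)=\sum_{1\le j\le m,\ (j,m)=1} e^{2\pi i jx/m}$. $\tau(n)$ is the number of positive divisors of $n$. *)

theory Defs
  imports "HOL-Analysis.Analysis"
begin

definition ramanujan_sum :: "nat \<Rightarrow> int \<Rightarrow> complex" where
  "ramanujan_sum m x =
     (\<Sum>j\<in>{j. 1 \<le> j \<and> j \<le> m \<and> coprime j m}.
        exp (2 * pi * \<i> * of_nat j * of_int x / of_nat m))"

definition num_divisors :: "nat \<Rightarrow> nat" where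
  "num_divisors n = card {d. d dvd n \<and> 0 < d}"

end

(*
  Grouping k = 1..m by gcd(k, m) turns the geometric sum of exp(2 pi i k x / m) into a
  sum of Ramanujan sums: sum over e | m of c_e(x) equals m if m | x and 0 otherwise.
  Applying this twice, for fixed s | n the function F(e) = sum over d | n of
  c_e(n/d) c_d(n/s) has divisor sum n [s | m] at every m | n, which is also the divisor
  sum of n [e = s]. Divisor sums determine a function on the divisors of n, so
  F(e) = n [e = s]; the theorem sums the diagonal terms F(d) with s = d.
*)
theory Submission
  imports Defs "HOL-Number_Theory.Totient"
begin

definition unity_root :: "nat \<Rightarrow> int \<Rightarrow> complex" where
  "unity_root m x = exp (2 * pi * \<i> * of_int x / of_nat m)"

lemma unity_root_eq_1_iff:
  assumes "m > 0"
  shows "unity_root m x = 1 \<longleftrightarrow> int m dvd x"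
proof
  assume "unity_root m x = 1"
  then obtain k :: int where "Im (2 * pi * \<i> * of_int x / of_nat m) = of_int (2 * k) * pi"
    unfolding unity_root_def exp_eq_1 by blast
  then have "real_of_int x = real m * of_int k"
    using assms by (simp add: field_simps)
  then have "x = int m * k"
    by (metis of_int_eq_iff of_int_mult of_int_of_nat_eq)
  then show "int m dvd x" by simp
next
  assume "int m dvd x"
  then obtain k where "x = int m * k" by auto
  then have "unity_root m x = exp (\<i> * (of_int k * (of_real pi * 2)))"
    unfolding unity_root_def using assms by (simp add: field_simps)
  then show "unity_root m x = 1" by simp
qed

lemma unity_root_int_mult: "unity_root m (int k * x) = unity_root m x ^ k"
  unfolding unity_root_def by (simp add: exp_of_nat_mult [symmetric] mult_ac)

lemma unity_root_mult_mult:
  assumes "g > 0"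
  shows "unity_root (m * g) (x * int g) = unity_root m x"
  unfolding unity_root_def using assms by (simp add: field_simps)

lemma sum_unity_root_powers:
  assumes "m > 0"
  shows "(\<Sum>j\<in>{0<..m}. unity_root m (int j * x)) = (if int m dvd x then of_nat m else 0)"
proof (cases "int m dvd x")
  case True
  then have "unity_root m (int j * x) = 1" for j
    using unity_root_eq_1_iff assms by auto
  then show ?thesis using True by simp
next
  case False
  define w where "w = unity_root m x"
  have "w \<noteq> 1" using False unity_root_eq_1_iff assms w_def by auto
  have "w ^ m = 1"
    unfolding w_def unity_root_int_mult [symmetric] using unity_root_eq_1_iff assms by simp
  have "(\<Sum>j\<in>{0<..m}. unity_root m (int j * x)) = (\<Sum>j<m. w ^ Suc j)"
    by (simp add: unity_root_int_mult w_def sum.atLeast1_atMost_eq flip: atLeastSucAtMost_greaterThanAtMost)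
  also have "\<dots> = w * (\<Sum>j<m. w ^ j)" by (simp add: sum_distrib_left)
  also have "\<dots> = 0" using geometric_sum [OF \<open>w \<noteq> 1\<close>, of m] \<open>w ^ m = 1\<close> by simp
  finally show ?thesis using False by simp
qed

lemma ramanujan_sum_conv_totatives:
  "ramanujan_sum m x = (\<Sum>j\<in>totatives m. unity_root m (int j * x))"
proof -
  have "{j. 1 \<le> j \<and> j \<le> m \<and> coprime j m} = totatives m"
    by (auto simp: in_totatives_iff)
  then show ?thesis
    unfolding ramanujan_sum_def unity_root_def by (simp add: mult_ac)
qed

lemma sum_greaterThanAtMost_by_totatives:
  fixes f :: "nat \<Rightarrow> 'a :: comm_monoid_add"
  assumes "n > 0"
  shows "(\<Sum>k\<in>{0<..n}. f k) = (\<Sum>e | e dvd n. \<Sum>j\<in>totatives e. f (j * (n div e)))"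
proof -
  have "(\<Sum>k\<in>{0<..n}. f k) = (\<Sum>g | g dvd n. \<Sum>k\<in>{k\<in>{0<..n}. gcd k n = g}. f k)"
    using assms by (intro sum.group [symmetric]) auto
  also have "\<dots> = (\<Sum>g | g dvd n. \<Sum>j\<in>totatives (n div g). f (j * g))"
    using assms by (intro sum.cong refl sum.reindex_bij_betw [symmetric] bij_betw_totatives_gcd_eq) auto
  also have "\<dots> = (\<Sum>e | e dvd n. \<Sum>j\<in>totatives e. f (j * (n div e)))"
    by (rule sum.reindex_bij_witness [of _ "(div) n" "(div) n"]) (use assms in \<open>auto elim: dvdE\<close>)
  finally show ?thesis .
qed

lemma sum_ramanujan_sum_divisors:
  assumes "m > 0"
  shows "(\<Sum>e | e dvd m. ramanujan_sum e x) = (if int m dvd x then of_nat m else 0)"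
proof -
  have "(\<Sum>e | e dvd m. ramanujan_sum e x)
      = (\<Sum>e | e dvd m. \<Sum>j\<in>totatives e. unity_root m (int (j * (m div e)) * x))"
    unfolding ramanujan_sum_conv_totatives
  proof (intro sum.cong refl)
    fix e j assume "e \<in> {e. e dvd m}"
    then obtain g where "m = e * g" by blast
    with assms have "g > 0" "m div e = g" by auto
    then show "unity_root e (int j * x) = unity_root m (int (j * (m div e)) * x)"
      using unity_root_mult_mult [of g e "int j * x"] \<open>m = e * g\<close> by (simp add: mult_ac)
  qed
  also have "\<dots> = (\<Sum>k\<in>{0<..m}. unity_root m (int k * x))"
    by (rule sum_greaterThanAtMost_by_totatives [OF assms, symmetric])
  finally show ?thesis using sum_unity_root_powers [OF assms] by simp
qed

lemma divisor_sums_eq_imp_eq: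
  fixes F K :: "nat \<Rightarrow> 'a :: cancel_comm_monoid_add"
  assumes "n > 0"
    and "\<And>m. m dvd n \<Longrightarrow> (\<Sum>e | e dvd m. F e) = (\<Sum>e | e dvd m. K e)"
    and "d dvd n"
  shows "F d = K d"
  using assms(3)
proof (induction d rule: less_induct)
  case (less d)
  have "{e. e dvd d} = insert d {e. e dvd d \<and> e < d}"
    using less.prems assms(1) by (auto dest: dvd_imp_le dvd_pos_nat)
  moreover have "(\<Sum>e | e dvd d \<and> e < d. F e) = (\<Sum>e | e dvd d \<and> e < d. K e)"
    using less.IH less.prems dvd_trans by (intro sum.cong) auto
  ultimately show ?case
    using assms(2) [OF less.prems] by simp
qed

lemma div_dvd_div_iff_dvd:
  fixes n d s :: nat
  assumes "n > 0" "d dvd n" "s dvd n"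
  shows "n div d dvd n div s \<longleftrightarrow> s dvd d"
proof -
  obtain a where n: "n = a * d" using assms(2) by (metis dvd_div_mult_self)
  have "s \<noteq> 0" using assms(1,3) by auto
  have "a > 0" using assms(1) n by simp
  have "n div d dvd n div s \<longleftrightarrow> a * s dvd a * d"
    using dvd_div_iff_mult [of s n a] assms n \<open>s \<noteq> 0\<close> by simp
  also have "\<dots> \<longleftrightarrow> s dvd d" using \<open>a > 0\<close> by simp
  finally show ?thesis .
qed

lemma sum_ramanujan_products_divisors:
  fixes n m s :: nat
  assumes "n > 0" "m dvd n" "s dvd n"
  shows "(\<Sum>e | e dvd m. \<Sum>d | d dvd n. ramanujan_sum e (int (n div d)) * ramanujan_sum d (int (n div s)))
       = (if s dvd m then of_nat n else 0)"
proof -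
  have "m > 0" "n div m > 0"
    using assms by (auto dest: dvd_pos_nat simp: dvd_div_eq_0_iff)
  have "(\<Sum>e | e dvd m. \<Sum>d | d dvd n. ramanujan_sum e (int (n div d)) * ramanujan_sum d (int (n div s)))
      = (\<Sum>d | d dvd n. (\<Sum>e | e dvd m. ramanujan_sum e (int (n div d))) * ramanujan_sum d (int (n div s)))"
    by (subst sum.swap) (simp add: sum_distrib_right)
  also have "\<dots> = (\<Sum>d | d dvd n \<and> d dvd n div m. of_nat m * ramanujan_sum d (int (n div s)))"
  proof -
    have "int m dvd int (n div d) \<longleftrightarrow> d dvd n div m" if "d dvd n" for d
      using that assms dvd_div_iff_mult [of d n m] dvd_div_iff_mult [of m n d]
      by (auto simp: mult.commute dvd_pos_nat)
    then have "(\<Sum>e | e dvd m. ramanujan_sum e (int (n div d))) * ramanujan_sum d (int (n div s))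
        = (if d dvd n div m then of_nat m * ramanujan_sum d (int (n div s)) else 0)" if "d dvd n" for d
      using that by (simp add: sum_ramanujan_sum_divisors [OF \<open>m > 0\<close>])
    then have "(\<Sum>d | d dvd n. (\<Sum>e | e dvd m. ramanujan_sum e (int (n div d))) * ramanujan_sum d (int (n div s)))
        = (\<Sum>d | d dvd n. if d dvd n div m then of_nat m * ramanujan_sum d (int (n div s)) else 0)"
      by (intro sum.cong) auto
    also have "\<dots> = (\<Sum>d | d dvd n \<and> d dvd n div m. of_nat m * ramanujan_sum d (int (n div s)))"
      using assms(1) by (simp add: sum.inter_filter [symmetric])
    finally show ?thesis .
  qed
  also have "{d. d dvd n \<and> d dvd n div m} = {d. d dvd n div m}"
    using assms(2) by (metis dvd_div_mult_self dvd_mult2)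
  also have "(\<Sum>d | d dvd n div m. of_nat m * ramanujan_sum d (int (n div s)))
      = of_nat m * (if n div m dvd n div s then of_nat (n div m) else 0)"
    by (simp add: sum_distrib_left [symmetric] sum_ramanujan_sum_divisors [OF \<open>n div m > 0\<close>])
  also have "\<dots> = (if s dvd m then of_nat n else 0)"
    using div_dvd_div_iff_dvd [OF assms] assms(2) by (simp flip: of_nat_mult)
  finally show ?thesis .
qed

theorem ramanujan_sum_orthogonality:
  fixes n r s :: nat
  assumes "n > 0" "r dvd n" "s dvd n"
  shows "(\<Sum>d | d dvd n. ramanujan_sum r (int (n div d)) * ramanujan_sum d (int (n div s)))
       = (if r = s then of_nat n else 0)"
proof (rule divisor_sums_eq_imp_eq [OF assms(1) _ assms(2)])
  fix m assume "m dvd n"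
  then show "(\<Sum>e | e dvd m. \<Sum>d | d dvd n. ramanujan_sum e (int (n div d)) * ramanujan_sum d (int (n div s)))
      = (\<Sum>e | e dvd m. if e = s then of_nat n else 0)"
    using assms sum_ramanujan_products_divisors [of n m s] by (simp add: sum.delta dvd_pos_nat)
qed

theorem mainTheorem4:
  fixes n :: nat
  assumes "n \<ge> 1"
  shows "(\<Sum>d\<in>{d. d dvd n}. \<Sum>d'\<in>{d'. d' dvd n}.
            ramanujan_sum d (int (n div d')) * ramanujan_sum d' (int (n div d)))
         = of_nat (n * num_divisors n)"
proof -
  have "n > 0" using assms by simp
  then have "num_divisors n = card {d. d dvd n}"
    unfolding num_divisors_def by (metis dvd_pos_nat)
  with \<open>n > 0\<close> show ?thesis
    by (simp add: ramanujan_sum_orthogonality)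
qed

end
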